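(* Let $M = \{ y = \psi(x) \}\subset\mathbb C^n$ be a $\mathcal C^2$-smooth graph at the origin (so $\psi(0)=0$) with $d\psi(0) = 0$. Then for any open set $U$ containing the origin, there exists a holomorphic embedding $\phi \colon \triangle^{n} \to U$ with $0\in\phi(\triangle^n)$ and $\phi(H^1)\cap M=\emptyset$.
   Context: Coordinates on $\mathbb C^n$ are $z=x+iy$ with $x,y\in\mathbb R^n$, and $\psi$ is defined near $0\in\mathbb R^n$ with values in $\mathbb R^n$. $\triangle$ is the open unit disc, $G^{k}(r,s):=s\triangle^{k}\setminus r\overline\triangle^{k}$, and $H^1:=(\triangle\times G^{n-1}(1/2,1))\cup(\tfrac12\triangle\times\triangle^{n-1})$ is the standard $1$-Hartogs figure. *)

theory Defs
  imports "HOL-Analysis.Analysis"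
begin

text \<open>Coordinates on C^n: C^n is complex^'n; the index type 'n is finite and
  well-ordered, so it has a distinguished first coordinate.\<close>

definition re_part :: "complex ^ 'n \<Rightarrow> real ^ 'n" where
  "re_part z = (\<chi> i. Re (z $ i))"

definition im_part :: "complex ^ 'n \<Rightarrow> real ^ 'n" where
  "im_part z = (\<chi> i. Im (z $ i))"

definition C2_on :: "(real ^ 'n) set \<Rightarrow> (real ^ 'n \<Rightarrow> real ^ 'n)
     \<Rightarrow> (real ^ 'n \<Rightarrow> ((real ^ 'n) \<Rightarrow>\<^sub>L (real ^ 'n))) \<Rightarrow> bool" where
  "C2_on V f D \<longleftrightarrow>
     (\<forall>x\<in>V. (f has_derivative blinfun_apply (D x)) (at x)) \<and>
     (\<exists>D2. (\<forall>x\<in>V. (D has_derivative blinfun_apply (D2 x)) (at x)) \<and> continuous_on V D2)"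

definition holomorphic_n :: "(complex ^ 'n \<Rightarrow> complex ^ 'm) \<Rightarrow> (complex ^ 'n) set \<Rightarrow> bool" where
  "holomorphic_n f S \<longleftrightarrow> open S \<and>
     (\<forall>z\<in>S. \<exists>L. (f has_derivative L) (at z) \<and> (\<forall>c v. L (c *s v) = c *s L v))"

definition holomorphic_embedding :: "(complex ^ 'n \<Rightarrow> complex ^ 'm) \<Rightarrow> (complex ^ 'n) set \<Rightarrow> bool" where
  "holomorphic_embedding f S \<longleftrightarrow> holomorphic_n f S \<and> inj_on f S \<and>
     (\<forall>z\<in>S. \<forall>L. (f has_derivative L) (at z) \<longrightarrow> inj L) \<and>
     (\<exists>g. homeomorphism S (f ` S) f g)"

definition polydisc :: "real \<Rightarrow> 'n set \<Rightarrow> (complex ^ 'n) set" where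
  "polydisc r I = {z. \<forall>i\<in>I. cmod (z $ i) < r}"

definition cpolydisc :: "real \<Rightarrow> 'n set \<Rightarrow> (complex ^ 'n) set" where
  "cpolydisc r I = {z. \<forall>i\<in>I. cmod (z $ i) \<le> r}"

definition first_idx :: "'n::wellorder" where
  "first_idx = (LEAST i. True)"

definition unit_polydisc :: "(complex ^ 'n) set" where
  "unit_polydisc = polydisc 1 UNIV"

text \<open>Standard 1-Hartogs figure
  H^1 = (\<triangle> \<times> G^{n-1}(1/2,1)) \<union> (1/2 \<triangle> \<times> \<triangle>^{n-1}),
  G^k(r,s) = s\<triangle>^k \<setminus> r closure(\<triangle>^k); first factor = first coordinate.\<close>
definition hartogs1 :: "(complex ^ 'n::{finite,wellorder}) set" where
  "hartogs1 =
    ({z. cmod (z $ first_idx) < 1} \<inter>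
       (polydisc 1 (- {first_idx}) - cpolydisc (1/2) (- {first_idx})))
    \<union> ({z. cmod (z $ first_idx) < 1/2} \<inter> polydisc 1 (- {first_idx}))"

end

theory Submission imports Defs begin

text \<open>The polydisc is mapped by a small multiple of the shear
  \<open>z \<mapsto> z + i (3/5 + 2 \<Sum>\<^sub>j\<^sub>\<noteq>\<^sub>1 z\<^sub>j\<^sup>2) e\<^sub>1\<close>, a biholomorphism of \<open>\<complex>\<^sup>n\<close>.
  Near the origin \<open>M\<close> is a graph \<open>y = \<psi>(x)\<close> with \<open>|\<psi>(x)| = o(|x|)\<close>, so a point of the
  image lying on \<open>M\<close> has all imaginary parts of its shear coordinates tiny.  On the
  Hartogs figure this is impossible: if \<open>|z\<^sub>1| < 1/2\<close> the imaginary part of the first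
  coordinate is at least about \<open>-1/2 + 3/5\<close>; otherwise some \<open>|z\<^sub>j| > 1/2\<close> with almost
  real \<open>z\<^sub>j\<close>, so \<open>2 Re z\<^sub>j\<^sup>2 > 1/2\<close> compensates \<open>Im z\<^sub>1 > -1\<close>.\<close>

definition shear_height :: "'n::finite \<Rightarrow> complex^'n \<Rightarrow> complex" where
  "shear_height k z = 3/5 + 2 * (\<Sum>j\<in>-{k}. (z$j)^2)"

definition shear :: "'n::finite \<Rightarrow> complex^'n \<Rightarrow> complex^'n" where
  "shear k z = z + axis k (\<i> * shear_height k z)"

definition shear_deriv :: "'n::finite \<Rightarrow> complex^'n \<Rightarrow> complex^'n \<Rightarrow> complex^'n" where
  "shear_deriv k z h = h + axis k (\<i> * (4 * (\<Sum>j\<in>-{k}. z$j * h$j)))"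

lemma bounded_linear_axis: "bounded_linear (axis k :: 'a::real_normed_vector \<Rightarrow> 'a^'n::finite)"
proof (rule bounded_linear_intro[where K=1])
  show "axis k (x + y) = axis k x + axis k y" for x y :: 'a by (simp add: axis_def vec_eq_iff)
  show "axis k (r *\<^sub>R x) = r *\<^sub>R axis k x" for r x by (simp add: axis_def vec_eq_iff)
  show "norm (axis k x) \<le> norm x * 1" for x :: 'a
    unfolding norm_vec_def axis_def L2_set_def
    by (simp add: sum.delta if_distrib[of "\<lambda>x. (norm x)^2"] cong: if_cong)
qed

lemma norm_vec_le_sum_norm: "norm (x::'a::real_normed_vector^'n::finite) \<le> (\<Sum>i\<in>UNIV. norm (x$i))"
  unfolding norm_vec_def by (rule L2_set_le_sum) simp

lemma norm_re_part_le: "norm (re_part z) \<le> norm z"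
  unfolding norm_vec_def re_part_def by (rule L2_set_mono) (auto simp: abs_Re_le_cmod)

lemma shear_height_add_axis [simp]: "shear_height k (z + axis k c) = shear_height k z"
  unfolding shear_height_def by (auto intro!: sum.cong simp: axis_def)

lemma shear_height_has_derivative:
  "(shear_height k has_derivative (\<lambda>h. 4 * (\<Sum>j\<in>-{k}. z$j * h$j))) (at z)"
proof -
  have "((\<lambda>x. (x$j)^2) has_derivative (\<lambda>h. 2 * z$j * h$j)) (at z)" for j
    by (rule derivative_eq_intros bounded_linear.has_derivative[OF bounded_linear_vec_nth]
        has_derivative_ident | simp add: fun_eq_iff mult_ac)+
  then have "((\<lambda>x. 3/5 + 2 * (\<Sum>j\<in>-{k}. (x$j)^2))
      has_derivative (\<lambda>h. 0 + 2 * (\<Sum>j\<in>-{k}. 2 * z$j * h$j))) (at z)"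
    by (intro has_derivative_add has_derivative_const has_derivative_mult_right has_derivative_sum)
  then show ?thesis
    unfolding shear_height_def by (simp add: sum_distrib_left mult_ac)
qed

lemma shear_has_derivative: "(shear k has_derivative shear_deriv k z) (at z)"
proof -
  have "((\<lambda>x. axis k (\<i> * shear_height k x))
      has_derivative (\<lambda>h. axis k (\<i> * (4 * (\<Sum>j\<in>-{k}. z$j * h$j))))) (at z)"
    by (intro bounded_linear.has_derivative[OF bounded_linear_axis]
        has_derivative_mult_right shear_height_has_derivative)
  from has_derivative_add[OF has_derivative_ident this] show ?thesis
    unfolding shear_def[abs_def] shear_deriv_def[abs_def] by simp
qed

lemma shear_deriv_complex_linear: "shear_deriv k z (c *s v) = c *s shear_deriv k z v"
  by (simp add: vec_eq_iff shear_deriv_def axis_def sum_distrib_left algebra_simps)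

text \<open>The derivative is unipotent: it fixes every coordinate except the \<open>k\<close>-th one,
  which is shifted by a function of the others.\<close>
lemma inj_shear_deriv: "inj (shear_deriv k z)"
proof (rule injI)
  fix x y assume eq: "shear_deriv k z x = shear_deriv k z y"
  have other: "x$j = y$j" if "j \<noteq> k" for j
    using arg_cong[OF eq, of "\<lambda>v. v$j"] that by (simp add: shear_deriv_def axis_def)
  then have "(\<Sum>j\<in>-{k}. z$j * x$j) = (\<Sum>j\<in>-{k}. z$j * y$j)"
    by (intro sum.cong) auto
  then have "x$k = y$k"
    using arg_cong[OF eq, of "\<lambda>v. v$k"] by (simp add: shear_deriv_def)
  with other show "x = y" by (metis vec_eq_iff)
qed

lemma continuous_on_shear_height: "continuous_on S (shear_height k)"
  by (intro continuous_at_imp_continuous_on ballI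
      has_derivative_continuous[OF shear_height_has_derivative])

lemma holomorphic_embedding_scaled_shear:
  assumes "open S" and "\<delta> \<noteq> 0"
  shows "holomorphic_embedding (\<lambda>z. \<delta> *\<^sub>R shear k z) S"
proof -
  let ?\<phi> = "\<lambda>z. \<delta> *\<^sub>R shear k z"
  have deriv: "(?\<phi> has_derivative (\<lambda>h. \<delta> *\<^sub>R shear_deriv k z h)) (at z)" for z
    by (rule bounded_linear.has_derivative[OF bounded_linear_scaleR_right shear_has_derivative])
  have "\<delta> *\<^sub>R shear_deriv k z (c *s v) = c *s (\<delta> *\<^sub>R shear_deriv k z v)" for z c v
    by (simp add: shear_deriv_complex_linear vec_eq_iff scaleR_conv_of_real)
  then have hol: "holomorphic_n ?\<phi> S"
    unfolding holomorphic_n_def using assms(1) deriv by blast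
  have inj_deriv: "inj L" if "(?\<phi> has_derivative L) (at z)" for z L
  proof -
    have "L = (\<lambda>h. \<delta> *\<^sub>R shear_deriv k z h)"
      using has_derivative_unique[OF that deriv] .
    then show "inj L"
      using inj_shear_deriv[of k z] assms(2) by (simp add: inj_def)
  qed
  define g where
    "g = (\<lambda>u. u - axis k (\<i> * shear_height k u)) \<circ> (\<lambda>w. inverse \<delta> *\<^sub>R w)"
  have g_\<phi>: "g (?\<phi> z) = z" for z
    using assms(2) by (simp add: g_def shear_def)
  then have inj: "inj_on ?\<phi> S" by (metis inj_on_inverseI)
  have "homeomorphism S (?\<phi> ` S) ?\<phi> g"
  proof (rule homeomorphismI)
    show "continuous_on S ?\<phi>" unfolding shear_def
      by (intro continuous_intros bounded_linear.continuous_on[OF bounded_linear_axis]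
          continuous_on_shear_height)
    show "continuous_on (?\<phi> ` S) g" unfolding g_def
      by (intro continuous_on_compose continuous_intros continuous_on_shear_height
          bounded_linear.continuous_on[OF bounded_linear_axis])
  qed (auto simp: g_\<phi>)
  with hol inj inj_deriv show ?thesis
    unfolding holomorphic_embedding_def by blast
qed

lemma shear_vanishes: "shear k (axis k (- \<i> * (3/5))) = 0"
proof -
  have "shear_height k (axis k (- \<i> * (3/5))) = 3/5"
    by (simp add: shear_height_def axis_def)
  then show ?thesis by (simp add: shear_def vec_eq_iff axis_def)
qed

lemma axis_in_unit_polydisc: "cmod c < 1 \<Longrightarrow> axis k c \<in> unit_polydisc"
  by (simp add: unit_polydisc_def polydisc_def axis_def)

lemma norm_shear_le:
  fixes z :: "complex^'n::finite"
  assumes "z \<in> unit_polydisc"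
  shows "norm (shear k z) \<le> 4 * real CARD('n)^2"
proof -
  define N where "N = real CARD('n)"
  have N1: "N \<ge> 1" unfolding N_def by (simp add: Suc_le_eq)
  have z1: "cmod (z$i) < 1" for i
    using assms by (auto simp: unit_polydisc_def polydisc_def)
  have "cmod (\<Sum>i\<in>-{k}. (z$i)^2) \<le> (\<Sum>i\<in>-{k}. cmod (z$i) ^ 2)"
    by (rule order_trans[OF norm_sum]) (simp add: norm_power)
  also have "\<dots> \<le> (\<Sum>i\<in>-{k}. 1)"
    using z1 by (intro sum_mono) (simp add: abs_square_le_1 less_imp_le)
  also have "\<dots> \<le> N" unfolding N_def by (simp add: card_mono)
  finally have "cmod (shear_height k z) \<le> 3/5 + 2 * N"
    unfolding shear_height_def
    using norm_triangle_ineq[of "3/5::complex" "2 * (\<Sum>i\<in>-{k}. (z$i)^2)"] by (simp add: norm_mult)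
  then have "cmod (shear k z $ j) \<le> 4 * N" for j
    using norm_triangle_ineq[of "z$j" "\<i> * shear_height k z"] z1[of j] N1
    by (cases "j = k") (auto simp: shear_def axis_def norm_mult)
  then have "(\<Sum>j\<in>UNIV. cmod (shear k z $ j)) \<le> (\<Sum>j\<in>(UNIV::'n set). 4 * N)"
    by (intro sum_mono)
  then show ?thesis
    using norm_vec_le_sum_norm[of "shear k z"] by (simp add: N_def power2_eq_square)
qed

lemma open_unit_polydisc: "open (unit_polydisc :: (complex^'n::finite) set)"
proof -
  have eq: "unit_polydisc = (\<Inter>i. {z::complex^'n. norm (z$i) < 1})"
    by (auto simp: unit_polydisc_def polydisc_def)
  have "open {z::complex^'n. norm (z$i) < 1}" for i
    by (intro open_Collect_less continuous_intros)
  then show ?thesis unfolding eq by (intro open_INT) auto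
qed

lemma hartogs1_subset_unit_polydisc:
  "hartogs1 \<subseteq> (unit_polydisc :: (complex^'n::{finite,wellorder}) set)"
proof
  fix z assume "z \<in> hartogs1"
  then have "cmod (z$i) < 1" for i
    by (cases "i = first_idx") (auto simp: hartogs1_def polydisc_def)
  then show "z \<in> unit_polydisc" by (simp add: unit_polydisc_def polydisc_def)
qed

lemma hartogs1_shear_Im_escapes:
  fixes z :: "complex^'n::{finite,wellorder}"
  assumes z: "z \<in> hartogs1" and "0 \<le> \<epsilon>" and small: "real CARD('n) * \<epsilon> \<le> 1/20"
  shows "\<exists>j. \<epsilon> < \<bar>Im (shear first_idx z $ j)\<bar>"
proof (rule ccontr)
  define k :: 'n where "k = first_idx"
  assume "\<nexists>j. \<epsilon> < \<bar>Im (shear first_idx z $ j)\<bar>"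
  then have Im_shear: "\<bar>Im (shear k z $ j)\<bar> \<le> \<epsilon>" for j
    unfolding k_def by (simp add: not_less)
  have Im_other: "(Im (z$j))^2 \<le> \<epsilon>^2" if "j \<noteq> k" for j
  proof -
    have "\<bar>Im (z$j)\<bar> \<le> \<epsilon>" using Im_shear[of j] that by (simp add: shear_def axis_def)
    then show ?thesis using power_mono[of "\<bar>Im (z$j)\<bar>" \<epsilon> 2] by simp
  qed
  have "\<epsilon> \<le> real CARD('n) * \<epsilon>"
    using \<open>0 \<le> \<epsilon>\<close> by (simp add: Suc_le_eq mult_le_cancel_right1)
  then have "\<epsilon> \<le> 1/20" using small by linarith
  then have \<epsilon>_sq: "\<epsilon>^2 \<le> \<epsilon>/20"
    using mult_left_mono[of \<epsilon> "1/20" \<epsilon>] \<open>0 \<le> \<epsilon>\<close> by (simp add: power2_eq_square)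
  define S where "S = (\<Sum>j\<in>-{k}. (Re (z$j))^2)"
  define I where "I = (\<Sum>j\<in>-{k}. (Im (z$j))^2)"
  have "I \<le> (\<Sum>j\<in>-{k}. \<epsilon>^2)"
    unfolding I_def using Im_other by (intro sum_mono) auto
  also have "\<dots> \<le> real CARD('n) * \<epsilon>^2" by (simp add: card_mono mult_right_mono)
  finally have I_small: "I \<le> \<epsilon>/20"
    using mult_right_mono[OF small, of \<epsilon>] \<open>0 \<le> \<epsilon>\<close> by (simp add: power2_eq_square mult_ac)
  have "Im (shear k z $ k) = Im (z$k) + 3/5 + 2 * S - 2 * I"
    unfolding shear_def shear_height_def S_def I_def
    by (simp add: Re_power2 sum_subtractf algebra_simps)
  then have upper: "Im (z$k) + 3/5 + 2 * S - 2 * I \<le> \<epsilon>"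
    using Im_shear[of k] by simp
  have "S \<ge> 0" unfolding S_def by (rule sum_nonneg) simp
  have "cmod (z$k) < 1/2 \<or> cmod (z$k) < 1 \<and> (\<exists>j. j \<noteq> k \<and> cmod (z$j) > 1/2)"
    using z unfolding hartogs1_def k_def polydisc_def cpolydisc_def by (auto simp: not_le)
  then show False
  proof
    assume "cmod (z$k) < 1/2"
    then show False
      using abs_Im_le_cmod[of "z$k"] upper \<open>S \<ge> 0\<close> I_small \<open>\<epsilon> \<le> 1/20\<close> by linarith
  next
    assume "cmod (z$k) < 1 \<and> (\<exists>j. j \<noteq> k \<and> cmod (z$j) > 1/2)"
    then obtain j where j: "j \<noteq> k" "cmod (z$j) > 1/2" and zk: "cmod (z$k) < 1" by blast
    have "(1/2)^2 < (cmod (z$j))^2" using j(2) by (intro power_strict_mono) auto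
    then have "1/4 < (Re (z$j))^2 + (Im (z$j))^2"
      using cmod_power2[of "z$j"] by (simp add: power2_eq_square)
    moreover have "(Re (z$j))^2 \<le> S" unfolding S_def using j(1) by (intro member_le_sum) auto
    ultimately show False
      using Im_other[OF j(1)] abs_Im_le_cmod[of "z$k"] zk upper I_small \<epsilon>_sq \<open>\<epsilon> \<le> 1/20\<close>
      by linarith
  qed
qed

lemma C2_on_flat_at_zero:
  assumes "C2_on V \<psi> D" and "0 \<in> V" and "\<psi> 0 = 0" and "D 0 = 0" and "\<eta> > 0"
  obtains d where "d > 0" and "\<And>y. norm y < d \<Longrightarrow> norm (\<psi> y) \<le> \<eta> * norm y"
proof -
  have "(\<psi> has_derivative blinfun_apply (D 0)) (at 0)"
    using assms(1,2) unfolding C2_on_def by blast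
  then have "(\<psi> has_derivative (\<lambda>_. 0)) (at 0)"
    using assms(4) by (simp add: zero_blinfun.rep_eq)
  then show thesis
    using that assms(3,5) unfolding has_derivative_at_alt by force
qed

lemma scaled_shear_hartogs1_off_graph:
  fixes \<psi> :: "real^'n::{finite,wellorder} \<Rightarrow> real^'n::{finite,wellorder}"
    and z :: "complex^'n::{finite,wellorder}"
  assumes "\<delta> > 0" and "4 * real CARD('n)^2 * \<delta> < d"
    and small: "\<And>y. norm y < d \<Longrightarrow> norm (\<psi> y) \<le> norm y / (80 * real CARD('n)^3)"
    and z: "z \<in> hartogs1"
  shows "im_part (\<delta> *\<^sub>R shear first_idx z) \<noteq> \<psi> (re_part (\<delta> *\<^sub>R shear first_idx z))"
proof
  define N where "N = real CARD('n)"
  have "N \<ge> 1" unfolding N_def by (simp add: Suc_le_eq)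
  define \<epsilon> where "\<epsilon> = 1 / (20 * N)"
  define w where "w = \<delta> *\<^sub>R shear first_idx z"
  assume on_graph: "im_part w = \<psi> (re_part w)"
  have "norm (re_part w) \<le> norm w" by (rule norm_re_part_le)
  also have "\<dots> \<le> \<delta> * (4 * N^2)"
    using norm_shear_le[of z first_idx] z hartogs1_subset_unit_polydisc \<open>\<delta> > 0\<close>
    by (auto simp: w_def N_def)
  finally have re_w: "norm (re_part w) \<le> \<delta> * (4 * N^2)" .
  then have "norm (\<psi> (re_part w)) \<le> norm (re_part w) / (80 * N^3)"
    using small[of "re_part w"] assms(2) by (simp add: N_def mult.commute)
  also have "\<dots> \<le> \<delta> * (4 * N^2) / (80 * N^3)"
    using re_w by (intro divide_right_mono) (simp_all add: N_def)
  also have "\<dots> = \<delta> * \<epsilon>"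
    using \<open>N \<ge> 1\<close> by (simp add: \<epsilon>_def field_simps power2_eq_square power3_eq_cube)
  finally have \<psi>_small: "norm (\<psi> (re_part w)) \<le> \<delta> * \<epsilon>" .
  have "\<delta> * Im (shear first_idx z $ j) = \<psi> (re_part w) $ j" for j
    using arg_cong[OF on_graph, of "\<lambda>v. v$j"] by (simp add: w_def im_part_def)
  then have "\<delta> * \<bar>Im (shear first_idx z $ j)\<bar> = \<bar>\<psi> (re_part w) $ j\<bar>" for j
    using \<open>\<delta> > 0\<close> by (metis abs_mult abs_of_pos)
  then have "\<bar>Im (shear first_idx z $ j)\<bar> \<le> \<epsilon>" for j
    using component_le_norm_cart[of "\<psi> (re_part w)" j] \<psi>_small \<open>\<delta> > 0\<close>
    by (metis mult_le_cancel_left_pos order_trans)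
  moreover have "real CARD('n) * \<epsilon> \<le> 1/20" and "0 \<le> \<epsilon>"
    using \<open>N \<ge> 1\<close> by (simp_all add: \<epsilon>_def N_def)
  ultimately show False
    using hartogs1_shear_Im_escapes[OF z] by (meson not_le)
qed

theorem lemma2p7:
  fixes \<psi> :: "(real ^ 'n::{finite,wellorder}) \<Rightarrow> real ^ 'n::{finite,wellorder}"
    and V :: "(real ^ 'n::{finite,wellorder}) set"
    and D :: "real ^ 'n::{finite,wellorder} \<Rightarrow> ((real ^ 'n::{finite,wellorder}) \<Rightarrow>\<^sub>L (real ^ 'n::{finite,wellorder}))"
    and U :: "(complex ^ 'n::{finite,wellorder}) set"
  assumes "open V" and "0 \<in> V"
    and "C2_on V \<psi> D"
    and "\<psi> 0 = 0"
    and "D 0 = 0"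
    and "open U" and "0 \<in> U"
  shows "\<exists>\<phi> :: complex ^ 'n::{finite,wellorder} \<Rightarrow> complex ^ 'n::{finite,wellorder}.
           holomorphic_embedding \<phi> unit_polydisc \<and> \<phi> ` unit_polydisc \<subseteq> U \<and>
           0 \<in> \<phi> ` unit_polydisc \<and>
           \<phi> ` hartogs1 \<inter> {z. re_part z \<in> V \<and> im_part z = \<psi> (re_part z)} = {}"
proof -
  define N where "N = real CARD('n)"
  obtain d where "d > 0" and small: "\<And>y. norm y < d \<Longrightarrow> norm (\<psi> y) \<le> norm y / (80 * N^3)"
    using C2_on_flat_at_zero[OF assms(3,2,4,5), of "1 / (80 * N^3)"] unfolding N_def by auto
  obtain r where "r > 0" and r: "ball 0 r \<subseteq> U" using assms(6,7) open_contains_ball by blast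
  define \<delta> where "\<delta> = min d r / (8 * N^2)"
  have "\<delta> > 0" and "4 * N^2 * \<delta> < d" and "4 * N^2 * \<delta> < r"
    using \<open>d > 0\<close> \<open>r > 0\<close> by (auto simp: \<delta>_def N_def field_simps)
  define \<phi> :: "complex^'n::{finite,wellorder} \<Rightarrow> complex^'n::{finite,wellorder}"
    where "\<phi> z = \<delta> *\<^sub>R shear first_idx z" for z
  have "holomorphic_embedding \<phi> unit_polydisc"
    unfolding \<phi>_def[abs_def] using \<open>\<delta> > 0\<close>
    by (intro holomorphic_embedding_scaled_shear open_unit_polydisc) simp
  moreover have "norm (\<phi> z) < r" if "z \<in> unit_polydisc" for z
    using norm_shear_le[OF that, of first_idx] \<open>\<delta> > 0\<close> \<open>4 * N^2 * \<delta> < r\<close>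
    by (simp add: \<phi>_def N_def) (smt (verit) mult.commute mult_left_mono)
  then have "\<phi> ` unit_polydisc \<subseteq> U" using r by force
  moreover have "0 \<in> \<phi> ` unit_polydisc"
  proof
    show "0 = \<phi> (axis first_idx (- \<i> * (3/5)))"
      unfolding \<phi>_def shear_vanishes by simp
    show "axis first_idx (- \<i> * (3/5)) \<in> unit_polydisc"
      by (rule axis_in_unit_polydisc) (simp add: norm_mult)
  qed
  moreover have "im_part (\<phi> z) \<noteq> \<psi> (re_part (\<phi> z))" if "z \<in> hartogs1" for z
    using scaled_shear_hartogs1_off_graph[OF \<open>\<delta> > 0\<close> _ _ that] small \<open>4 * N^2 * \<delta> < d\<close>
    unfolding \<phi>_def N_def by blast
  ultimately show ?thesis by blast
qed

end
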